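(* Let $\mathbb{V}$ and $\mathbb{V}'$ be varieties with signatures $\mathcal{F}\subseteq\mathcal{F}'$ and defining sets of identities $\Sigma\subseteq\Sigma'$ respectively, and suppose $\mathbb{V}$ is BIT speciale with terms $0,\alpha_1,\dots,\alpha_n,\theta$ (so $\mathbb{V}'$ is BIT speciale with the same terms, and every $\mathbb{V}'$-algebra is a $\mathbb{V}$-algebra by forgetting the operations in $\mathcal{F}'\setminus\mathcal{F}$). Let $A'$ be a $\mathbb{V}'$-algebra and $H\subseteq A'$. The following are equivalent: (i) $H$ is an ideal of $A'$ in the variety $\mathbb{V}'$; (ii) $H$ is an ideal of $A'$ in the variety $\mathbb{V}$, and for every $\tau\in\mathcal{F}'\setminus\mathcal{F}$ of arity $k$, all $a_1,\dots,a_k\in A'$, all $1\le i\le n$ and all $h_{rs}\in H$ ($1\le r\le k$, $1\le s\le n$), one has $\alpha_i\big(\tau(\theta(h_{11},\dots,h_{1n},a_1),\dots,\theta(h_{k1},\dots,h_{kn},a_k)),\tau(a_1,\dots,a_k)\big)\in H$; (iii) $H$ is an ideal of $A'$ in the variety $\mathbb{V}$, and for every $\tau\in\mathcal{F}'\setminus\mathcal{F}$ of arity $k$, all $a_1,\dots,a_k\in A'$, all $1\le i\le n$, $1\le j\le k$ and all $h_1,\dots,h_n\in H$, one has $\alpha_i\big(\tau(a_1,\dots,a_{j-1},\theta(h_1,\dots,h_n,a_j),a_{j+1},\dots,a_k),\tau(a_1,\dots,a_k)\big)\in H$.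
   Context: BIT speciale: the algebraic theory contains a constant $0$ and, for some $n\ge1$, binary terms $\alpha_1,\dots,\alpha_n$ and an $(n+1)$-ary term $\theta$ such that $\alpha_i(x,x)=0$ and $\theta(\alpha_1(x,y),\dots,\alpha_n(x,y),y)=x$ are identities. For a variety $\mathbb{W}$ with signature $\mathcal{G}$ containing $0$ in its theory: an ideal term of $\mathbb{W}$ in the variables $y_1,\dots,y_p$ is a term $t(x_1,\dots,x_m,y_1,\dots,y_p)$ over $\mathcal{G}$ such that $t(x_1,\dots,x_m,0,\dots,0)=0$ is an identity of $\mathbb{W}$; a non-empty subset $H$ of a $\mathbb{W}$-algebra $A$ is an ideal of $A$ in $\mathbb{W}$ if $t(a_1,\dots,a_m,b_1,\dots,b_p)\in H$ for every ideal term $t$ of $\mathbb{W}$, all $a_r\in A$ and all $b_s\in H$. *)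

theory Defs
  imports Main
begin

datatype 'f trm = Var nat | App 'f "'f trm list"

fun vars :: "'f trm \<Rightarrow> nat set" where
  "vars (Var v) = {v}"
| "vars (App f ts) = (\<Union>t\<in>set ts. vars t)"

fun wf_trm :: "'f set \<Rightarrow> ('f \<Rightarrow> nat) \<Rightarrow> 'f trm \<Rightarrow> bool" where
  "wf_trm F ar (Var v) = True"
| "wf_trm F ar (App f ts) = (f \<in> F \<and> length ts = ar f \<and> (\<forall>t\<in>set ts. wf_trm F ar t))"

fun subst :: "(nat \<Rightarrow> 'f trm) \<Rightarrow> 'f trm \<Rightarrow> 'f trm" where
  "subst \<sigma> (Var v) = \<sigma> v"
| "subst \<sigma> (App f ts) = App f (map (subst \<sigma>) ts)"

fun eval :: "('f \<Rightarrow> 'a list \<Rightarrow> 'a) \<Rightarrow> 'f trm \<Rightarrow> (nat \<Rightarrow> 'a) \<Rightarrow> 'a" where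
  "eval I (Var v) e = e v"
| "eval I (App f ts) e = I f (map (\<lambda>t. eval I t e) ts)"

definition idents_over :: "'f set \<Rightarrow> ('f \<Rightarrow> nat) \<Rightarrow> ('f trm \<times> 'f trm) set \<Rightarrow> bool" where
  "idents_over F ar \<Sigma> \<longleftrightarrow> (\<forall>(s,t)\<in>\<Sigma>. wf_trm F ar s \<and> wf_trm F ar t)"

section \<open>Equational theory of the variety with signature F and defining identities \<Sigma>
  (equational logic; by Birkhoff's completeness theorem these are exactly the identities of the variety)\<close>

inductive derivable :: "'f set \<Rightarrow> ('f \<Rightarrow> nat) \<Rightarrow> ('f trm \<times> 'f trm) set \<Rightarrow> 'f trm \<Rightarrow> 'f trm \<Rightarrow> bool"
  for F ar \<Sigma> where
  refl: "wf_trm F ar t \<Longrightarrow> derivable F ar \<Sigma> t t"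
| sym: "derivable F ar \<Sigma> s t \<Longrightarrow> derivable F ar \<Sigma> t s"
| trans: "derivable F ar \<Sigma> s t \<Longrightarrow> derivable F ar \<Sigma> t u \<Longrightarrow> derivable F ar \<Sigma> s u"
| ax: "(s, t) \<in> \<Sigma> \<Longrightarrow> (\<forall>v. wf_trm F ar (\<sigma> v)) \<Longrightarrow>
        derivable F ar \<Sigma> (subst \<sigma> s) (subst \<sigma> t)"
| cong: "f \<in> F \<Longrightarrow> length ss = ar f \<Longrightarrow> length ts = ar f \<Longrightarrow>
        (\<forall>i < ar f. derivable F ar \<Sigma> (ss ! i) (ts ! i)) \<Longrightarrow>
        derivable F ar \<Sigma> (App f ss) (App f ts)"

definition is_algebra :: "'f set \<Rightarrow> ('f \<Rightarrow> nat) \<Rightarrow> ('f trm \<times> 'f trm) set \<Rightarrow> 'a set \<Rightarrow> ('f \<Rightarrow> 'a list \<Rightarrow> 'a) \<Rightarrow> bool" where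
  "is_algebra F ar \<Sigma> A I \<longleftrightarrow>
     (\<forall>f\<in>F. \<forall>xs. length xs = ar f \<longrightarrow> set xs \<subseteq> A \<longrightarrow> I f xs \<in> A) \<and>
     (\<forall>(s,t)\<in>\<Sigma>. \<forall>e. (\<forall>v. e v \<in> A) \<longrightarrow> eval I s e = eval I t e)"

text \<open>Variables: x = Var 0, y = Var 1 for the binary terms alpha_i;
  theta has variables 0..n-1 (the first n arguments) and n (the last argument).\<close>

definition bit_speciale :: "'f set \<Rightarrow> ('f \<Rightarrow> nat) \<Rightarrow> ('f trm \<times> 'f trm) set \<Rightarrow>
    'f trm \<Rightarrow> 'f trm list \<Rightarrow> 'f trm \<Rightarrow> bool" where
  "bit_speciale F ar \<Sigma> zero alpha theta \<longleftrightarrow>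
     (let n = length alpha in
       n \<ge> 1 \<and>
       wf_trm F ar zero \<and> vars zero = {} \<and>
       (\<forall>i<n. wf_trm F ar (alpha ! i) \<and> vars (alpha ! i) \<subseteq> {0, 1}) \<and>
       wf_trm F ar theta \<and> vars theta \<subseteq> {..n} \<and>
       (\<forall>i<n. derivable F ar \<Sigma> (subst (\<lambda>v. Var 0) (alpha ! i)) zero) \<and>
       derivable F ar \<Sigma> (subst (\<lambda>k. if k < n then alpha ! k else Var 1) theta) (Var 0))"

text \<open>An ideal term in the variables Y (the y's; all other variables are the x's).\<close>
definition ideal_term :: "'f set \<Rightarrow> ('f \<Rightarrow> nat) \<Rightarrow> ('f trm \<times> 'f trm) set \<Rightarrow> 'f trm \<Rightarrow> nat set \<Rightarrow> 'f trm \<Rightarrow> bool" where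
  "ideal_term F ar \<Sigma> zero Y t \<longleftrightarrow>
     wf_trm F ar t \<and> derivable F ar \<Sigma> (subst (\<lambda>v. if v \<in> Y then zero else Var v) t) zero"

definition is_ideal :: "'f set \<Rightarrow> ('f \<Rightarrow> nat) \<Rightarrow> ('f trm \<times> 'f trm) set \<Rightarrow> 'f trm \<Rightarrow>
    'a set \<Rightarrow> ('f \<Rightarrow> 'a list \<Rightarrow> 'a) \<Rightarrow> 'a set \<Rightarrow> bool" where
  "is_ideal F ar \<Sigma> zero A I H \<longleftrightarrow>
     H \<noteq> {} \<and> H \<subseteq> A \<and>
     (\<forall>Y t. ideal_term F ar \<Sigma> zero Y t \<longrightarrow>
        (\<forall>e. (\<forall>v. e v \<in> A) \<longrightarrow> (\<forall>v\<in>Y. e v \<in> H) \<longrightarrow> eval I t e \<in> H))"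

definition bin_val :: "('f \<Rightarrow> 'a list \<Rightarrow> 'a) \<Rightarrow> 'f trm \<Rightarrow> 'a \<Rightarrow> 'a \<Rightarrow> 'a" where
  "bin_val I t u v = eval I t (\<lambda>k. if k = 0 then u else v)"

definition theta_val :: "('f \<Rightarrow> 'a list \<Rightarrow> 'a) \<Rightarrow> 'f trm \<Rightarrow> nat \<Rightarrow> (nat \<Rightarrow> 'a) \<Rightarrow> 'a \<Rightarrow> 'a" where
  "theta_val I t n h a = eval I t (\<lambda>k. if k < n then h k else a)"

end

theory Submission
  imports Defs
begin

(* Write a ~ b for a, b in A with alpha_i(a, b) in H for all i.  For a V-ideal H this relation is
   reflexive, since alpha_i(a, a) = 0, and transitive, since alpha_i(theta(h, theta(h', c)), c) is an
   ideal term in h, h'.  Condition (iii) gives (ii) by replacing one argument at a time and chaining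
   with transitivity; (ii) gives (iii) by taking h_r = alpha(a_r, a_r) in the unchanged arguments.
   An ideal of V' satisfies (iii) because alpha_i(tau(..., theta(y, x_j), ...), tau(x)) is an ideal
   term.  Conversely, since theta(alpha(c, a), a) = c, condition (ii) makes every operation preserve
   ~, hence every term preserves it; for an ideal term t this gives t(a, h) ~ t(a, 0) = 0, and
   b ~ 0 forces b = theta(alpha(b, 0), 0) in H. *)

lemma subst_subst: "subst \<sigma> (subst \<tau> t) = subst (\<lambda>v. subst \<sigma> (\<tau> v)) t"
  by (induction t) auto

lemma eval_subst: "eval I (subst \<sigma> t) e = eval I t (\<lambda>v. eval I (\<sigma> v) e)"
  by (induction t) (auto cong: map_cong)

lemma subst_cong: "(\<And>v. v \<in> vars t \<Longrightarrow> \<sigma> v = \<sigma>' v) \<Longrightarrow> subst \<sigma> t = subst \<sigma>' t"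
  by (induction t) auto

lemma eval_cong: "\<forall>v\<in>vars t. e v = e' v \<Longrightarrow> eval I t e = eval I t e'"
  by (induction t) (auto cong: map_cong)

lemma subst_closed: "vars t = {} \<Longrightarrow> subst \<sigma> t = t"
  by (induction t) (auto simp: map_idI)

lemma wf_trm_subst:
  "wf_trm G ar t \<Longrightarrow> (\<And>v. wf_trm G ar (\<sigma> v)) \<Longrightarrow> wf_trm G ar (subst \<sigma> t)"
  by (induction t) auto

lemma wf_trm_mono: "wf_trm G ar t \<Longrightarrow> G \<subseteq> G' \<Longrightarrow> wf_trm G' ar t"
  by (induction t) auto

lemma derivable_mono:
  assumes "derivable G ar \<Gamma> s t" "G \<subseteq> G'" "\<Gamma> \<subseteq> \<Gamma>'"
  shows "derivable G' ar \<Gamma>' s t"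
  using assms
proof (induction rule: derivable.induct)
  case (ax s t \<sigma>)
  then show ?case by (auto intro: derivable.ax wf_trm_mono)
qed (auto intro: derivable.intros wf_trm_mono)

lemma derivable_subst:
  assumes "derivable G ar \<Gamma> s t" "\<And>v. wf_trm G ar (\<sigma> v)"
  shows "derivable G ar \<Gamma> (subst \<sigma> s) (subst \<sigma> t)"
  using assms
proof (induction rule: derivable.induct)
  case (ax s t \<tau>)
  then have "derivable G ar \<Gamma> (subst (\<lambda>v. subst \<sigma> (\<tau> v)) s) (subst (\<lambda>v. subst \<sigma> (\<tau> v)) t)"
    by (intro derivable.ax) (auto intro: wf_trm_subst)
  then show ?case by (simp add: subst_subst)
qed (auto intro: derivable.intros wf_trm_subst)

lemma derivable_subst_cong:
  assumes "wf_trm G ar t" "\<forall>v\<in>vars t. derivable G ar \<Gamma> (\<sigma> v) (\<sigma>' v)"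
  shows "derivable G ar \<Gamma> (subst \<sigma> t) (subst \<sigma>' t)"
  using assms by (induction t) (auto intro!: derivable.cong)

lemma is_algebra_closed:
  "is_algebra G ar \<Gamma> A I \<Longrightarrow> f \<in> G \<Longrightarrow> length xs = ar f \<Longrightarrow> set xs \<subseteq> A \<Longrightarrow> I f xs \<in> A"
  unfolding is_algebra_def by blast

lemma eval_in_carrier:
  assumes "is_algebra G ar \<Gamma> A I" "wf_trm G ar t" "\<And>v. e v \<in> A"
  shows "eval I t e \<in> A"
  using assms(2)
proof (induction t)
  case (App f ts)
  then show ?case by (auto intro!: is_algebra_closed[OF assms(1)])
qed (simp add: assms(3))

lemma derivable_sound:
  assumes "is_algebra G ar \<Gamma> A I" "derivable G ar \<Gamma> s t" "\<And>v. e v \<in> A"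
  shows "eval I s e = eval I t e"
  using assms(2,3)
proof (induction arbitrary: e rule: derivable.induct)
  case (ax s t \<sigma>)
  have "\<And>v. eval I (\<sigma> v) e \<in> A" using ax eval_in_carrier[OF assms(1)] by blast
  then have "eval I s (\<lambda>v. eval I (\<sigma> v) e) = eval I t (\<lambda>v. eval I (\<sigma> v) e)"
    using assms(1) ax(1) unfolding is_algebra_def by fastforce
  then show ?case by (simp add: eval_subst)
next
  case (cong f ss ts)
  then have "map (\<lambda>t. eval I t e) ss = map (\<lambda>t. eval I t e) ts"
    by (intro nth_equalityI) auto
  then show ?case by simp
qed auto

lemma is_algebra_mono:
  "is_algebra G' ar \<Gamma>' A I \<Longrightarrow> G \<subseteq> G' \<Longrightarrow> \<Gamma> \<subseteq> \<Gamma>' \<Longrightarrow> is_algebra G ar \<Gamma> A I"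
  unfolding is_algebra_def by blast

lemma is_ideal_antimono:
  assumes "is_ideal G' ar \<Gamma>' zero A I H" "G \<subseteq> G'" "\<Gamma> \<subseteq> \<Gamma>'"
  shows "is_ideal G ar \<Gamma> zero A I H"
  using assms unfolding is_ideal_def ideal_term_def by (meson derivable_mono wf_trm_mono)

lemma bit_speciale_mono:
  "bit_speciale G ar \<Gamma> zero alpha theta \<Longrightarrow> G \<subseteq> G' \<Longrightarrow> \<Gamma> \<subseteq> \<Gamma>' \<Longrightarrow>
    bit_speciale G' ar \<Gamma>' zero alpha theta"
  unfolding bit_speciale_def Let_def by (auto intro: wf_trm_mono derivable_mono)

definition bin_app :: "'f trm \<Rightarrow> 'f trm \<Rightarrow> 'f trm \<Rightarrow> 'f trm" where
  "bin_app t u v = subst (\<lambda>k. if k = 0 then u else v) t"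

definition theta_app :: "'f trm \<Rightarrow> nat \<Rightarrow> (nat \<Rightarrow> 'f trm) \<Rightarrow> 'f trm \<Rightarrow> 'f trm" where
  "theta_app t n hs x = subst (\<lambda>k. if k < n then hs k else x) t"

lemma eval_bin_app: "eval I (bin_app t u v) e = bin_val I t (eval I u e) (eval I v e)"
  unfolding bin_app_def bin_val_def eval_subst by (rule arg_cong[where f = "eval I t"]) auto

lemma eval_theta_app:
  "eval I (theta_app t n hs x) e = theta_val I t n (\<lambda>k. eval I (hs k) e) (eval I x e)"
  unfolding theta_app_def theta_val_def eval_subst by (rule arg_cong[where f = "eval I t"]) auto

lemma subst_bin_app: "subst \<sigma> (bin_app t u v) = bin_app t (subst \<sigma> u) (subst \<sigma> v)"
  unfolding bin_app_def subst_subst by (rule subst_cong) auto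

lemma subst_theta_app:
  "subst \<sigma> (theta_app t n hs x) = theta_app t n (\<lambda>k. subst \<sigma> (hs k)) (subst \<sigma> x)"
  unfolding theta_app_def subst_subst by (rule subst_cong) auto

lemma theta_app_cong:
  "\<lbrakk>t = t'; n = n'; \<And>k. k < n' =simp=> hs k = hs' k; x = x'\<rbrakk> \<Longrightarrow>
    theta_app t n hs x = theta_app t' n' hs' x'"
  unfolding theta_app_def simp_implies_def by (auto intro!: subst_cong)

lemma theta_val_cong:
  "\<lbrakk>t = t'; n = n'; \<And>k. k < n' =simp=> h k = h' k; x = x'\<rbrakk> \<Longrightarrow>
    theta_val I t n h x = theta_val I t' n' h' x'"
  unfolding theta_val_def simp_implies_def by (clarify, rule arg_cong[where f = "eval I t'"]) auto

lemma wf_bin_app: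
  "wf_trm G ar t \<Longrightarrow> wf_trm G ar u \<Longrightarrow> wf_trm G ar v \<Longrightarrow> wf_trm G ar (bin_app t u v)"
  unfolding bin_app_def by (simp add: wf_trm_subst)

lemma wf_theta_app:
  "wf_trm G ar t \<Longrightarrow> (\<And>k. wf_trm G ar (hs k)) \<Longrightarrow> wf_trm G ar x \<Longrightarrow> wf_trm G ar (theta_app t n hs x)"
  unfolding theta_app_def by (simp add: wf_trm_subst)

(* alpha(f(x_0, ..., theta(y, x_j), ..., x_(k-1)), f(x_0, ..., x_(k-1))) for the binary term alpha = t,
   with y_s = Var s (s < n) and x_r = Var (n + r) *)
definition step_term :: "'f trm \<Rightarrow> 'f trm \<Rightarrow> nat \<Rightarrow> 'f \<Rightarrow> nat \<Rightarrow> nat \<Rightarrow> 'f trm" where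
  "step_term t theta n f k j =
     bin_app t
       (App f (map (\<lambda>r. if r = j then theta_app theta n Var (Var (n + r)) else Var (n + r)) [0..<k]))
       (App f (map (\<lambda>r. Var (n + r)) [0..<k]))"

(* alpha(theta(y, theta(y', x)), x) for alpha = t, with y = Var 0..n-1, y' = Var n..2n-1, x = Var 2n *)
definition trans_term :: "'f trm \<Rightarrow> 'f trm \<Rightarrow> nat \<Rightarrow> 'f trm" where
  "trans_term t theta n =
     bin_app t (theta_app theta n Var (theta_app theta n (\<lambda>s. Var (n + s)) (Var (2 * n)))) (Var (2 * n))"

lemma eval_step_term:
  assumes "j < k" "\<forall>s<n. e s = h s" "\<forall>r<k. e (n + r) = a r"
  shows "eval I (step_term t theta n f k j) e =
    bin_val I t (I f (map (\<lambda>r. if r = j then theta_val I theta n h (a j) else a r) [0..<k]))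
      (I f (map a [0..<k]))"
proof -
  have "map (\<lambda>r. eval I (if r = j then theta_app theta n Var (Var (n + r)) else Var (n + r)) e) [0..<k]
      = map (\<lambda>r. if r = j then theta_val I theta n h (a j) else a r) [0..<k]"
    using assms by (intro map_cong) (auto simp: eval_theta_app cong: theta_val_cong)
  moreover have "map (\<lambda>r. e (n + r)) [0..<k] = map a [0..<k]"
    using assms by simp
  ultimately show ?thesis by (simp add: step_term_def eval_bin_app comp_def del: map_eq_conv)
qed

lemma eval_trans_term:
  assumes "\<forall>s<n. e s = h s" "\<forall>s<n. e (n + s) = h' s" "e (2 * n) = c"
  shows "eval I (trans_term t theta n) e = bin_val I t (theta_val I theta n h (theta_val I theta n h' c)) c"
  using assms by (simp add: trans_term_def eval_bin_app eval_theta_app cong: theta_val_cong)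

(* Conditions (ii) and (iii) of the theorem for a single k-ary operation op. *)
definition compatible_mod ::
    "('f \<Rightarrow> 'a list \<Rightarrow> 'a) \<Rightarrow> 'f trm list \<Rightarrow> 'f trm \<Rightarrow> 'a set \<Rightarrow> 'a set \<Rightarrow> ('a list \<Rightarrow> 'a) \<Rightarrow> nat \<Rightarrow> bool" where
  "compatible_mod I alpha theta A H op k \<longleftrightarrow>
     (\<forall>a h. \<forall>i < length alpha.
        (\<forall>r < k. a r \<in> A) \<longrightarrow>
        (\<forall>r < k. \<forall>s < length alpha. h r s \<in> H) \<longrightarrow>
        bin_val I (alpha ! i)
          (op (map (\<lambda>r. theta_val I theta (length alpha) (h r) (a r)) [0..<k]))
          (op (map a [0..<k])) \<in> H)"

definition argumentwise_compatible_mod ::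
    "('f \<Rightarrow> 'a list \<Rightarrow> 'a) \<Rightarrow> 'f trm list \<Rightarrow> 'f trm \<Rightarrow> 'a set \<Rightarrow> 'a set \<Rightarrow> ('a list \<Rightarrow> 'a) \<Rightarrow> nat \<Rightarrow> bool" where
  "argumentwise_compatible_mod I alpha theta A H op k \<longleftrightarrow>
     (\<forall>a h. \<forall>i < length alpha. \<forall>j < k.
        (\<forall>r < k. a r \<in> A) \<longrightarrow>
        (\<forall>s < length alpha. h s \<in> H) \<longrightarrow>
        bin_val I (alpha ! i)
          (op (map (\<lambda>r. if r = j then theta_val I theta (length alpha) h (a j) else a r) [0..<k]))
          (op (map a [0..<k])) \<in> H)"

lemma compatible_modD:
  assumes "compatible_mod I alpha theta A H op k" "i < length alpha"
    "\<forall>r<k. a r \<in> A" "\<forall>r<k. \<forall>s<length alpha. h r s \<in> H"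
  shows "bin_val I (alpha ! i)
    (op (map (\<lambda>r. theta_val I theta (length alpha) (h r) (a r)) [0..<k])) (op (map a [0..<k])) \<in> H"
  using assms unfolding compatible_mod_def by blast

lemma argumentwise_compatible_modD:
  assumes "argumentwise_compatible_mod I alpha theta A H op k" "i < length alpha" "j < k"
    "\<forall>r<k. a r \<in> A" "\<forall>s<length alpha. h s \<in> H"
  shows "bin_val I (alpha ! i)
    (op (map (\<lambda>r. if r = j then theta_val I theta (length alpha) h (a j) else a r) [0..<k]))
    (op (map a [0..<k])) \<in> H"
  using assms unfolding argumentwise_compatible_mod_def by blast

locale bit_speciale_variety =
  fixes G :: "'f set" and ar :: "'f \<Rightarrow> nat" and \<Gamma> :: "('f trm \<times> 'f trm) set"
    and zero theta :: "'f trm" and alpha :: "'f trm list"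
  assumes bit_speciale: "bit_speciale G ar \<Gamma> zero alpha theta"
begin

lemma wf_zero: "wf_trm G ar zero"
  and vars_zero: "vars zero = {}"
  and wf_alpha: "i < length alpha \<Longrightarrow> wf_trm G ar (alpha ! i)"
  and wf_theta: "wf_trm G ar theta"
  and derivable_alpha_Var_Var:
    "i < length alpha \<Longrightarrow> derivable G ar \<Gamma> (bin_app (alpha ! i) (Var 0) (Var 0)) zero"
  and derivable_theta_alpha:
    "derivable G ar \<Gamma> (theta_app theta (length alpha) (\<lambda>s. alpha ! s) (Var 1)) (Var 0)"
  using bit_speciale unfolding bit_speciale_def Let_def bin_app_def theta_app_def by auto

lemma derivable_alpha_diag:
  assumes "i < length alpha" "wf_trm G ar w"
  shows "derivable G ar \<Gamma> (bin_app (alpha ! i) w w) zero"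
  using derivable_subst[OF derivable_alpha_Var_Var[OF assms(1)], of "\<lambda>_. w"] assms(2)
  by (simp add: subst_bin_app subst_closed[OF vars_zero])

lemma derivable_alpha_zero:
  assumes "i < length alpha" "derivable G ar \<Gamma> u w" "derivable G ar \<Gamma> u' w" "wf_trm G ar w"
  shows "derivable G ar \<Gamma> (bin_app (alpha ! i) u u') zero"
proof -
  have "derivable G ar \<Gamma> (bin_app (alpha ! i) u u') (bin_app (alpha ! i) w w)"
    unfolding bin_app_def using assms wf_alpha by (intro derivable_subst_cong) auto
  then show ?thesis
    using derivable_alpha_diag[OF assms(1,4)] by (rule derivable.trans)
qed

lemma derivable_theta_zero:
  assumes "derivable G ar \<Gamma> u w" "wf_trm G ar w"
  shows "derivable G ar \<Gamma> (theta_app theta (length alpha) (\<lambda>_. zero) u) w"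
proof -
  have "derivable G ar \<Gamma> (theta_app theta (length alpha) (\<lambda>_. zero) u)
      (theta_app theta (length alpha) (\<lambda>s. bin_app (alpha ! s) w w) w)"
    unfolding theta_app_def using assms wf_theta
    by (intro derivable_subst_cong) (auto intro: derivable.sym derivable_alpha_diag)
  moreover have "derivable G ar \<Gamma> (theta_app theta (length alpha) (\<lambda>s. bin_app (alpha ! s) w w) w) w"
    using derivable_subst[OF derivable_theta_alpha, of "\<lambda>_. w"] assms(2)
    by (simp add: subst_theta_app bin_app_def)
  ultimately show ?thesis by (rule derivable.trans)
qed

lemma ideal_term_step_term:
  assumes f: "f \<in> G" and i: "i < length alpha" and j: "j < ar f"
  shows "ideal_term G ar \<Gamma> zero {..<length alpha} (step_term (alpha ! i) theta (length alpha) f (ar f) j)"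
proof -
  let ?n = "length alpha"
  let ?U = "App f (map (\<lambda>r. if r = j then theta_app theta ?n (\<lambda>_. zero) (Var (?n + r)) else Var (?n + r)) [0..<ar f])"
  let ?U' = "App f (map (\<lambda>r. Var (?n + r)) [0..<ar f])"
  have "derivable G ar \<Gamma> ?U ?U'"
    using f by (intro derivable.cong) (auto intro!: derivable.refl derivable_theta_zero)
  then have "derivable G ar \<Gamma> (bin_app (alpha ! i) ?U ?U') zero"
    using f by (intro derivable_alpha_zero[OF i]) (auto intro: derivable.refl)
  moreover have "subst (\<lambda>v. if v \<in> {..<?n} then zero else Var v) (step_term (alpha ! i) theta ?n f (ar f) j)
      = bin_app (alpha ! i) ?U ?U'"
    unfolding step_term_def
    by (simp add: subst_bin_app subst_theta_app comp_def if_distrib cong: theta_app_cong if_cong)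
  moreover have "wf_trm G ar (step_term (alpha ! i) theta ?n f (ar f) j)"
    unfolding step_term_def using f wf_alpha[OF i] wf_theta
    by (auto intro!: wf_bin_app wf_theta_app)
  ultimately show ?thesis unfolding ideal_term_def by simp
qed

lemma ideal_term_trans_term:
  assumes i: "i < length alpha"
  shows "ideal_term G ar \<Gamma> zero {..<2 * length alpha} (trans_term (alpha ! i) theta (length alpha))"
proof -
  let ?n = "length alpha"
  let ?x = "Var (2 * ?n)"
  let ?U = "theta_app theta ?n (\<lambda>_. zero) (theta_app theta ?n (\<lambda>_. zero) ?x)"
  have "derivable G ar \<Gamma> (theta_app theta ?n (\<lambda>_. zero) ?x) ?x"
    by (rule derivable_theta_zero) (auto intro: derivable.refl)
  then have "derivable G ar \<Gamma> ?U ?x"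
    by (rule derivable_theta_zero) simp
  then have "derivable G ar \<Gamma> (bin_app (alpha ! i) ?U ?x) zero"
    by (intro derivable_alpha_zero[OF i]) (auto intro: derivable.refl)
  moreover have "subst (\<lambda>v. if v \<in> {..<2 * ?n} then zero else Var v) (trans_term (alpha ! i) theta ?n)
      = bin_app (alpha ! i) ?U ?x"
    unfolding trans_term_def by (simp add: subst_bin_app subst_theta_app cong: theta_app_cong)
  moreover have "wf_trm G ar (trans_term (alpha ! i) theta ?n)"
    unfolding trans_term_def using wf_alpha[OF i] wf_theta
    by (auto intro!: wf_bin_app wf_theta_app)
  ultimately show ?thesis unfolding ideal_term_def by simp
qed

lemma is_ideal_argumentwise_compatible_mod:
  assumes ideal: "is_ideal G ar \<Gamma> zero A I H" and f: "f \<in> G"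
  shows "argumentwise_compatible_mod I alpha theta A H (I f) (ar f)"
  unfolding argumentwise_compatible_mod_def
proof (intro allI impI)
  fix a h i j
  assume i: "i < length alpha" and j: "j < ar f"
    and a: "\<forall>r<ar f. a r \<in> A" and h: "\<forall>s<length alpha. h s \<in> H"
  let ?n = "length alpha"
  define e where "e v = (if v < ?n then h v else if v < ?n + ar f then a (v - ?n) else a j)" for v
  have "\<forall>v. e v \<in> A" and "\<forall>v\<in>{..<?n}. e v \<in> H"
    using a h j ideal unfolding e_def is_ideal_def by auto
  then have "eval I (step_term (alpha ! i) theta ?n f (ar f) j) e \<in> H"
    using ideal ideal_term_step_term[OF f i j] unfolding is_ideal_def by blast
  then show "bin_val I (alpha ! i)
      (I f (map (\<lambda>r. if r = j then theta_val I theta ?n h (a j) else a r) [0..<ar f]))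
      (I f (map a [0..<ar f])) \<in> H"
    using j by (subst (asm) eval_step_term) (auto simp: e_def)
qed

end

locale bit_speciale_ideal = bit_speciale_variety +
  fixes A :: "'a set" and I :: "'f \<Rightarrow> 'a list \<Rightarrow> 'a" and H :: "'a set"
  assumes algebra: "is_algebra G ar \<Gamma> A I" and ideal: "is_ideal G ar \<Gamma> zero A I H"
begin

lemma ideal_subset: "H \<subseteq> A" and ideal_nonempty: "H \<noteq> {}"
  using ideal unfolding is_ideal_def by auto

definition zero_val :: 'a where
  "zero_val = eval I zero (\<lambda>_. undefined)"

lemma eval_zero: "eval I zero e = zero_val"
  unfolding zero_val_def by (rule eval_cong) (simp add: vars_zero)

lemma theta_val_in_carrier:
  "(\<And>s. s < length alpha \<Longrightarrow> h s \<in> A) \<Longrightarrow> a \<in> A \<Longrightarrow> theta_val I theta (length alpha) h a \<in> A"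
  unfolding theta_val_def by (rule eval_in_carrier[OF algebra wf_theta]) auto

lemma theta_bin_val_cancel:
  assumes "a \<in> A" "b \<in> A"
  shows "theta_val I theta (length alpha) (\<lambda>s. bin_val I (alpha ! s) a b) b = a"
  using derivable_sound[OF algebra derivable_theta_alpha, of "\<lambda>k. if k = 0 then a else b"] assms
  by (simp add: eval_theta_app bin_val_def)

lemma bin_val_diag: "a \<in> A \<Longrightarrow> i < length alpha \<Longrightarrow> bin_val I (alpha ! i) a a = zero_val"
  using derivable_sound[OF algebra derivable_alpha_Var_Var, of i "\<lambda>_. a"]
  by (simp add: eval_bin_app eval_zero)

lemma eval_in_ideal: "ideal_term G ar \<Gamma> zero UNIV t \<Longrightarrow> (\<And>v. e v \<in> H) \<Longrightarrow> eval I t e \<in> H"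
  using ideal ideal_subset unfolding is_ideal_def by blast

lemma zero_val_in_ideal: "zero_val \<in> H"
proof -
  obtain x where "x \<in> H" using ideal_nonempty by blast
  moreover have "ideal_term G ar \<Gamma> zero UNIV zero"
    unfolding ideal_term_def by (simp add: subst_closed[OF vars_zero] wf_zero derivable.refl)
  ultimately show ?thesis using eval_in_ideal[of zero "\<lambda>_. x"] by (simp add: eval_zero)
qed

lemma theta_val_zero_in_ideal:
  assumes "\<And>s. s < length alpha \<Longrightarrow> h s \<in> H"
  shows "theta_val I theta (length alpha) h zero_val \<in> H"
proof -
  have "derivable G ar \<Gamma> (theta_app theta (length alpha) (\<lambda>_. zero) zero) zero"
    by (intro derivable_theta_zero derivable.refl wf_zero)
  then have "ideal_term G ar \<Gamma> zero UNIV theta"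
    unfolding ideal_term_def theta_app_def by (simp add: wf_theta)
  then show ?thesis
    unfolding theta_val_def using assms zero_val_in_ideal by (intro eval_in_ideal) auto
qed

lemma bin_val_zero_in_ideal:
  assumes "b \<in> H" "i < length alpha"
  shows "bin_val I (alpha ! i) b zero_val \<in> H"
proof -
  have "ideal_term G ar \<Gamma> zero UNIV (alpha ! i)"
    using derivable_alpha_diag[OF assms(2) wf_zero]
    unfolding ideal_term_def bin_app_def by (simp add: wf_alpha assms(2))
  then show ?thesis
    unfolding bin_val_def using assms(1) zero_val_in_ideal by (intro eval_in_ideal) auto
qed

definition congruent_mod :: "'a \<Rightarrow> 'a \<Rightarrow> bool" where
  "congruent_mod a b \<longleftrightarrow> a \<in> A \<and> b \<in> A \<and> (\<forall>i < length alpha. bin_val I (alpha ! i) a b \<in> H)"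

lemma congruent_mod_refl: "a \<in> A \<Longrightarrow> congruent_mod a a"
  unfolding congruent_mod_def using bin_val_diag zero_val_in_ideal by simp

lemma congruent_mod_trans:
  assumes ab: "congruent_mod a b" and bc: "congruent_mod b c"
  shows "congruent_mod a c"
proof -
  let ?n = "length alpha"
  have abc: "a \<in> A" "b \<in> A" "c \<in> A" using ab bc unfolding congruent_mod_def by auto
  define e where "e v = (if v < ?n then bin_val I (alpha ! v) a b
      else if v < 2 * ?n then bin_val I (alpha ! (v - ?n)) b c else c)" for v
  have "\<forall>v\<in>{..<2 * ?n}. e v \<in> H"
    using ab bc unfolding e_def congruent_mod_def by auto
  moreover have "\<forall>v. e v \<in> A"
    using calculation ideal_subset abc unfolding e_def by (auto split: if_splits)
  ultimately have "eval I (trans_term (alpha ! i) theta ?n) e \<in> H" if "i < ?n" for i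
    using ideal ideal_term_trans_term[OF that] unfolding is_ideal_def by blast
  moreover have "eval I (trans_term (alpha ! i) theta ?n) e = bin_val I (alpha ! i) a c" for i
    by (subst eval_trans_term[where h = "\<lambda>s. bin_val I (alpha ! s) a b" and h' = "\<lambda>s. bin_val I (alpha ! s) b c"])
      (auto simp: e_def theta_bin_val_cancel abc)
  ultimately show ?thesis using abc unfolding congruent_mod_def by auto
qed

lemma congruent_mod_zero_iff: "congruent_mod b zero_val \<longleftrightarrow> b \<in> H"
proof
  assume "congruent_mod b zero_val"
  then have "b = theta_val I theta (length alpha) (\<lambda>s. bin_val I (alpha ! s) b zero_val) zero_val"
    unfolding congruent_mod_def by (simp add: theta_bin_val_cancel)
  then show "b \<in> H"
    using \<open>congruent_mod b zero_val\<close> unfolding congruent_mod_def by (metis theta_val_zero_in_ideal)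
next
  assume "b \<in> H"
  then show "congruent_mod b zero_val"
    using ideal_subset zero_val_in_ideal bin_val_zero_in_ideal unfolding congruent_mod_def by auto
qed

lemma congruent_mod_op:
  assumes closed: "\<And>xs. length xs = k \<Longrightarrow> set xs \<subseteq> A \<Longrightarrow> op xs \<in> A"
    and comp: "compatible_mod I alpha theta A H op k"
    and ca: "\<forall>r<k. congruent_mod (c r) (a r)"
  shows "congruent_mod (op (map c [0..<k])) (op (map a [0..<k]))"
proof -
  let ?h = "\<lambda>r s. bin_val I (alpha ! s) (c r) (a r)"
  have a: "\<forall>r<k. a r \<in> A" and c: "\<forall>r<k. c r \<in> A" and h: "\<forall>r<k. \<forall>s<length alpha. ?h r s \<in> H"
    using ca unfolding congruent_mod_def by auto
  have "map (\<lambda>r. theta_val I theta (length alpha) (?h r) (a r)) [0..<k] = map c [0..<k]"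
    using a c by (simp add: theta_bin_val_cancel)
  moreover have "bin_val I (alpha ! i)
      (op (map (\<lambda>r. theta_val I theta (length alpha) (?h r) (a r)) [0..<k])) (op (map a [0..<k])) \<in> H"
    if "i < length alpha" for i
    using compatible_modD[OF comp that a h] .
  moreover have "op (map c [0..<k]) \<in> A" "op (map a [0..<k]) \<in> A"
    using a c by (auto intro!: closed)
  ultimately show ?thesis unfolding congruent_mod_def by (simp del: map_eq_conv)
qed

lemma congruent_mod_op_argument:
  assumes closed: "\<And>xs. length xs = k \<Longrightarrow> set xs \<subseteq> A \<Longrightarrow> op xs \<in> A"
    and argw: "argumentwise_compatible_mod I alpha theta A H op k"
    and j: "j < k" and a: "\<forall>r<k. a r \<in> A" and h: "\<forall>s<length alpha. h s \<in> H"
  shows "congruent_mod (op (map (\<lambda>r. if r = j then theta_val I theta (length alpha) h (a j) else a r) [0..<k]))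
    (op (map a [0..<k]))"
proof -
  have "theta_val I theta (length alpha) h (a j) \<in> A"
    using h a j ideal_subset by (intro theta_val_in_carrier) auto
  then have "op (map (\<lambda>r. if r = j then theta_val I theta (length alpha) h (a j) else a r) [0..<k]) \<in> A"
    using a by (intro closed) auto
  moreover have "op (map a [0..<k]) \<in> A"
    using a by (intro closed) auto
  ultimately show ?thesis
    using argumentwise_compatible_modD[OF argw _ j a h] unfolding congruent_mod_def by blast
qed

lemma compatible_mod_if_argumentwise:
  assumes closed: "\<And>xs. length xs = k \<Longrightarrow> set xs \<subseteq> A \<Longrightarrow> op xs \<in> A"
    and argw: "argumentwise_compatible_mod I alpha theta A H op k"
  shows "compatible_mod I alpha theta A H op k"
  unfolding compatible_mod_def
proof (intro allI impI)
  fix a h i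
  assume i: "i < length alpha" and a: "\<forall>r<k. a r \<in> A" and h: "\<forall>r<k. \<forall>s<length alpha. h r s \<in> H"
  let ?n = "length alpha"
  define c where "c r = theta_val I theta ?n (h r) (a r)" for r
  define m where "m j r = (if r < j then c r else a r)" for j r
  have m: "\<forall>r<k. m j r \<in> A" for j
    using a h ideal_subset unfolding m_def c_def by (auto intro!: theta_val_in_carrier)
  have steps: "congruent_mod (op (map (m j) [0..<k])) (op (map a [0..<k]))" if "j \<le> k" for j
    using that
  proof (induction j)
    case 0
    show ?case using a by (simp add: m_def) (intro congruent_mod_refl closed, auto)
  next
    case (Suc j)
    have "map (m (Suc j)) [0..<k]
        = map (\<lambda>r. if r = j then theta_val I theta ?n (h j) (m j j) else m j r) [0..<k]"
      by (auto simp: m_def c_def)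
    moreover have "congruent_mod
        (op (map (\<lambda>r. if r = j then theta_val I theta ?n (h j) (m j j) else m j r) [0..<k]))
        (op (map (m j) [0..<k]))"
      using Suc.prems m h by (intro congruent_mod_op_argument[OF closed argw]) auto
    ultimately have "congruent_mod (op (map (m (Suc j)) [0..<k])) (op (map (m j) [0..<k]))"
      by (simp only:)
    moreover have "congruent_mod (op (map (m j) [0..<k])) (op (map a [0..<k]))"
      using Suc by simp
    ultimately show ?case by (rule congruent_mod_trans)
  qed
  have "map (m k) [0..<k] = map c [0..<k]"
    by (simp add: m_def)
  then have "congruent_mod (op (map c [0..<k])) (op (map a [0..<k]))"
    using steps[of k] by (simp del: map_eq_conv)
  then show "bin_val I (alpha ! i) (op (map (\<lambda>r. theta_val I theta ?n (h r) (a r)) [0..<k]))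
      (op (map a [0..<k])) \<in> H"
    using i unfolding congruent_mod_def c_def by simp
qed

lemma argumentwise_if_compatible_mod:
  assumes comp: "compatible_mod I alpha theta A H op k"
  shows "argumentwise_compatible_mod I alpha theta A H op k"
  unfolding argumentwise_compatible_mod_def
proof (intro allI impI)
  fix a h i j
  assume i: "i < length alpha" and j: "j < k" and a: "\<forall>r<k. a r \<in> A" and h: "\<forall>s<length alpha. h s \<in> H"
  let ?n = "length alpha"
  define h' where "h' r = (if r = j then h else (\<lambda>s. bin_val I (alpha ! s) (a r) (a r)))" for r
  have "\<forall>r<k. \<forall>s<?n. h' r s \<in> H"
    using h a unfolding h'_def by (simp add: bin_val_diag zero_val_in_ideal)
  from compatible_modD[OF comp i a this]
  have "bin_val I (alpha ! i) (op (map (\<lambda>r. theta_val I theta ?n (h' r) (a r)) [0..<k]))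
      (op (map a [0..<k])) \<in> H" .
  moreover have "map (\<lambda>r. theta_val I theta ?n (h' r) (a r)) [0..<k]
      = map (\<lambda>r. if r = j then theta_val I theta ?n h (a j) else a r) [0..<k]"
    using a unfolding h'_def by (auto simp: theta_bin_val_cancel)
  ultimately show "bin_val I (alpha ! i)
      (op (map (\<lambda>r. if r = j then theta_val I theta ?n h (a j) else a r) [0..<k]))
      (op (map a [0..<k])) \<in> H"
    by simp
qed

lemma eval_congruent_mod:
  assumes alg: "is_algebra G' ar \<Gamma>' A I"
    and comp: "\<forall>f\<in>G'. compatible_mod I alpha theta A H (I f) (ar f)"
    and t: "wf_trm G' ar t" and e: "\<forall>v. congruent_mod (e v) (e' v)"
  shows "congruent_mod (eval I t e) (eval I t e')"
  using t
proof (induction t)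
  case (Var v)
  then show ?case using e by simp
next
  case (App f ts)
  then have f: "f \<in> G'" and len: "length ts = ar f" and ts: "\<forall>t\<in>set ts. wf_trm G' ar t"
    by auto
  have "\<forall>r<ar f. congruent_mod (eval I (ts ! r) e) (eval I (ts ! r) e')"
    using App.IH ts len by (simp add: nth_mem)
  then have "congruent_mod (I f (map (\<lambda>r. eval I (ts ! r) e) [0..<ar f]))
      (I f (map (\<lambda>r. eval I (ts ! r) e') [0..<ar f]))"
    using comp f by (intro congruent_mod_op[OF is_algebra_closed[OF alg f]]) auto
  moreover have "map (\<lambda>r. eval I (ts ! r) e) [0..<ar f] = map (\<lambda>t. eval I t e) ts" for e
    using len by (intro nth_equalityI) auto
  ultimately show ?case by simp
qed

lemma is_ideal_extension:
  assumes alg: "is_algebra G' ar \<Gamma>' A I"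
    and comp: "\<forall>f\<in>G'. compatible_mod I alpha theta A H (I f) (ar f)"
  shows "is_ideal G' ar \<Gamma>' zero A I H"
  unfolding is_ideal_def
proof (intro conjI allI impI)
  fix Y t e
  assume t: "ideal_term G' ar \<Gamma>' zero Y t" and eA: "\<forall>v. e v \<in> A" and eH: "\<forall>v\<in>Y. e v \<in> H"
  define e' where "e' v = (if v \<in> Y then zero_val else e v)" for v
  have "\<forall>v. congruent_mod (e v) (e' v)"
    using eA eH unfolding e'_def by (simp add: congruent_mod_zero_iff congruent_mod_refl)
  then have "congruent_mod (eval I t e) (eval I t e')"
    using t unfolding ideal_term_def by (intro eval_congruent_mod[OF alg comp]) auto
  moreover have "eval I t e' = eval I (subst (\<lambda>v. if v \<in> Y then zero else Var v) t) e"
    unfolding eval_subst e'_def by (rule arg_cong[where f = "eval I t"]) (simp add: eval_zero fun_eq_iff)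
  moreover have "\<dots> = eval I zero e"
    using t eA unfolding ideal_term_def by (intro derivable_sound[OF alg]) auto
  ultimately show "eval I t e \<in> H" by (simp add: eval_zero congruent_mod_zero_iff)
qed (use ideal_nonempty ideal_subset in auto)

lemma compatible_mod_iff_argumentwise:
  assumes "is_algebra G' ar \<Gamma>' A I" "f \<in> G'"
  shows "compatible_mod I alpha theta A H (I f) (ar f) \<longleftrightarrow>
    argumentwise_compatible_mod I alpha theta A H (I f) (ar f)"
  using compatible_mod_if_argumentwise[where op = "I f" and k = "ar f", OF is_algebra_closed[OF assms]]
    argumentwise_if_compatible_mod by blast

theorem is_ideal_extension_iff_argumentwise:
  assumes sig: "G \<subseteq> G'" and ids: "\<Gamma> \<subseteq> \<Gamma>'" and alg: "is_algebra G' ar \<Gamma>' A I"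
  shows "is_ideal G' ar \<Gamma>' zero A I H \<longleftrightarrow>
    (\<forall>f\<in>G' - G. argumentwise_compatible_mod I alpha theta A H (I f) (ar f))"
proof
  interpret extension: bit_speciale_variety G' ar \<Gamma>' zero theta alpha
    using bit_speciale_mono[OF bit_speciale sig ids] by unfold_locales
  assume "is_ideal G' ar \<Gamma>' zero A I H"
  then show "\<forall>f\<in>G' - G. argumentwise_compatible_mod I alpha theta A H (I f) (ar f)"
    using extension.is_ideal_argumentwise_compatible_mod by blast
next
  assume "\<forall>f\<in>G' - G. argumentwise_compatible_mod I alpha theta A H (I f) (ar f)"
  then have "\<forall>f\<in>G'. argumentwise_compatible_mod I alpha theta A H (I f) (ar f)"
    using is_ideal_argumentwise_compatible_mod[OF ideal] by blast
  then have "\<forall>f\<in>G'. compatible_mod I alpha theta A H (I f) (ar f)"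
    using compatible_mod_iff_argumentwise[OF alg] by blast
  then show "is_ideal G' ar \<Gamma>' zero A I H" by (rule is_ideal_extension[OF alg])
qed

theorem is_ideal_extension_iff_compatible:
  assumes sig: "G \<subseteq> G'" and ids: "\<Gamma> \<subseteq> \<Gamma>'" and alg: "is_algebra G' ar \<Gamma>' A I"
  shows "is_ideal G' ar \<Gamma>' zero A I H \<longleftrightarrow>
    (\<forall>f\<in>G' - G. compatible_mod I alpha theta A H (I f) (ar f))"
  using is_ideal_extension_iff_argumentwise[OF assms] compatible_mod_iff_argumentwise[OF alg]
  by blast

end

theorem corollary2p7:
  fixes F F' :: "'f set" and ar :: "'f \<Rightarrow> nat"
    and \<Sigma> \<Sigma>' :: "('f trm \<times> 'f trm) set"
    and zero theta :: "'f trm" and alpha :: "'f trm list"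
    and A :: "'a set" and I :: "'f \<Rightarrow> 'a list \<Rightarrow> 'a" and H :: "'a set"
  assumes sig: "F \<subseteq> F'" and ids: "\<Sigma> \<subseteq> \<Sigma>'"
    and wfS: "idents_over F ar \<Sigma>" and wfS': "idents_over F' ar \<Sigma>'"
    and bit: "bit_speciale F ar \<Sigma> zero alpha theta"
    and alg: "is_algebra F' ar \<Sigma>' A I"
    and HA: "H \<subseteq> A"
  shows "(is_ideal F' ar \<Sigma>' zero A I H \<longleftrightarrow>
          is_ideal F ar \<Sigma> zero A I H \<and>
          (\<forall>\<tau>\<in>F' - F. \<forall>a h. \<forall>i < length alpha.
             (\<forall>r < ar \<tau>. a r \<in> A) \<longrightarrow>
             (\<forall>r < ar \<tau>. \<forall>s < length alpha. h r s \<in> H) \<longrightarrow>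
             bin_val I (alpha ! i)
               (I \<tau> (map (\<lambda>r. theta_val I theta (length alpha) (h r) (a r)) [0..<ar \<tau>]))
               (I \<tau> (map a [0..<ar \<tau>])) \<in> H))
       \<and> (is_ideal F' ar \<Sigma>' zero A I H \<longleftrightarrow>
          is_ideal F ar \<Sigma> zero A I H \<and>
          (\<forall>\<tau>\<in>F' - F. \<forall>a h. \<forall>i < length alpha. \<forall>j < ar \<tau>.
             (\<forall>r < ar \<tau>. a r \<in> A) \<longrightarrow>
             (\<forall>s < length alpha. h s \<in> H) \<longrightarrow>
             bin_val I (alpha ! i)
               (I \<tau> (map (\<lambda>r. if r = j then theta_val I theta (length alpha) h (a j) else a r) [0..<ar \<tau>]))
               (I \<tau> (map a [0..<ar \<tau>])) \<in> H))"
proof -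
  have "(is_ideal F' ar \<Sigma>' zero A I H \<longleftrightarrow>
        is_ideal F ar \<Sigma> zero A I H \<and> (\<forall>\<tau>\<in>F' - F. compatible_mod I alpha theta A H (I \<tau>) (ar \<tau>)))
      \<and> (is_ideal F' ar \<Sigma>' zero A I H \<longleftrightarrow>
        is_ideal F ar \<Sigma> zero A I H \<and>
          (\<forall>\<tau>\<in>F' - F. argumentwise_compatible_mod I alpha theta A H (I \<tau>) (ar \<tau>)))"
  proof (cases "is_ideal F ar \<Sigma> zero A I H")
    case True
    interpret bit_speciale_ideal F ar \<Sigma> zero theta alpha A I H
      using bit is_algebra_mono[OF alg sig ids] True by unfold_locales
    show ?thesis
      using True is_ideal_extension_iff_compatible[OF sig ids alg]
        is_ideal_extension_iff_argumentwise[OF sig ids alg] by argo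
  next
    case False
    then show ?thesis using is_ideal_antimono[OF _ sig ids] by blast
  qed
  then show ?thesis
    unfolding compatible_mod_def argumentwise_compatible_mod_def .
qed

end
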